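(* Let $p$ be a prime, $f\ge 1$ an integer and $q=p^f$. For $0\le j\le f-1$ fix integers $r_j\ge 0$ such that $r=r_0+r_1p+\cdots+r_{f-1}p^{f-1}>0$ is divisible by $q-1$. For a tuple $(k_0,\dots,k_{f-1})$ of integers write $k=k_0+k_1p+\cdots+k_{f-1}p^{f-1}$. Then for every integer $i\in[0,q-1)$, \[ \sum_{\substack{0\le k_j\le r_j\ (0\le j\le f-1)\\ k\equiv i \bmod (q-1)}} \binom{r_0}{k_0}\binom{r_1}{k_1}\cdots\binom{r_{f-1}}{k_{f-1}} \equiv \begin{cases} (-1)^i \pmod p & \text{if } i\in(0,q-1),\\ 2 \pmod p & \text{if } i=0.\end{cases} \]
   Context: Here the $r_j$ are arbitrary non-negative integers (not necessarily base-$p$ digits; they may exceed $p-1$). *)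

theory Defs
  imports "HOL-Number_Theory.Number_Theory" "HOL-Library.FuncSet"
begin

end

theory Submission
  imports Defs "HOL-Computational_Algebra.Polynomial"
begin

(* Work in F_p[X]/(X^N - 1) with N = q - 1, encoded as congruence of integer polynomials
   modulo the ideal (p, X^N - 1).  The sum in question is the sum of the coefficients of
   P = prod_j (1 + X^(p^j))^(r_j) at exponents congruent to i mod N, and such class sums are
   invariant under this congruence.  By the Frobenius, P = (1 + X)^r mod p, and
   (1 + X)^q = 1 + X^q = 1 + X, so (1 + X)^r = (1 + X)^N because r is a positive multiple
   of N.  The class sums of (1 + X)^N are 2 for i = 0 (exponents 0 and N) and binom(N, i)
   otherwise, and binom(q - 1, i) = (-1)^i mod p because p divides binom(q, m) for
   0 < m < q. *)

definition cong2 :: "'a::comm_ring_1 \<Rightarrow> 'a \<Rightarrow> 'a \<Rightarrow> 'a \<Rightarrow> bool"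
    (\<open>(\<open>indent=1 notation=\<open>mixfix cong2\<close>\<close>[_ = _] '(' mod _, _'))\<close>)
  where "[x = y] (mod a, b) \<longleftrightarrow> (\<exists>u v. x - y = a * u + b * v)"

lemma cong2_refl [simp]: "[x = x] (mod a, b)"
  unfolding cong2_def by (intro exI[of _ 0]) simp

lemma cong2_sym: "[x = y] (mod a, b) \<Longrightarrow> [y = x] (mod a, b)"
  unfolding cong2_def by (metis minus_diff_eq minus_add_distrib mult_minus_right)

lemma cong2_trans [trans]:
  "[x = y] (mod a, b) \<Longrightarrow> [y = z] (mod a, b) \<Longrightarrow> [x = z] (mod a, b)"
  unfolding cong2_def
proof (elim exE)
  fix u v u' v' assume "x - y = a * u + b * v" "y - z = a * u' + b * v'"
  then have "x - z = a * (u + u') + b * (v + v')" by (simp add: algebra_simps)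
  then show "\<exists>u v. x - z = a * u + b * v" by blast
qed

lemma cong2_mult:
  assumes "[x = y] (mod a, b)" "[x' = y'] (mod a, b)"
  shows "[x * x' = y * y'] (mod a, b)"
proof -
  obtain u v u' v' where "x - y = a * u + b * v" "x' - y' = a * u' + b * v'"
    using assms unfolding cong2_def by blast
  then have "x * x' - y * y' = a * (u * x' + y * u') + b * (v * x' + y * v')"
    by (simp add: algebra_simps)
  then show ?thesis unfolding cong2_def by blast
qed

lemma cong2_pow: "[x = y] (mod a, b) \<Longrightarrow> [x ^ n = y ^ n] (mod a, b)"
  by (induction n) (simp_all add: cong2_mult)

lemma cong2_prod:
  "(\<And>j. j \<in> J \<Longrightarrow> [f j = g j] (mod a, b))
    \<Longrightarrow> [prod f J = prod g J] (mod a, b)"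
  by (induction J rule: infinite_finite_induct) (simp_all add: cong2_mult)

lemma cong2_if_dvd_left: "a dvd x - y \<Longrightarrow> [x = y] (mod a, b)"
  unfolding cong2_def by (metis dvd_def add_0_right mult_zero_left mult.commute)

lemma cong2_if_dvd_right: "b dvd x - y \<Longrightarrow> [x = y] (mod a, b)"
  unfolding cong2_def by (metis dvd_def add_0_left mult_zero_right)

lemma cong2_power_add_period:
  assumes period: "[x ^ Suc N = x] (mod a, b)" and "n \<ge> 1"
  shows "[x ^ (n + N * t) = x ^ n] (mod a, b)"
proof (induction t)
  case (Suc t)
  have "n + N * Suc t = (n - 1) + Suc N + N * t"
    using \<open>n \<ge> 1\<close> by simp
  then have "x ^ (n + N * Suc t) = x ^ (n - 1) * x ^ Suc N * x ^ (N * t)"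
    by (simp only: power_add)
  also have "[\<dots> = x ^ (n - 1) * x * x ^ (N * t)] (mod a, b)"
    by (intro cong2_mult period cong2_refl)
  also have "x ^ (n - 1) * x * x ^ (N * t) = x ^ (n + N * t)"
    using \<open>n \<ge> 1\<close> by (simp flip: power_add power_Suc2)
  also have "[\<dots> = x ^ n] (mod a, b)" by (fact Suc)
  finally show ?case .
qed simp

lemma freshmans_dream_dvd:
  fixes x y :: "'a::comm_ring_1"
  assumes "prime p"
  shows "of_nat p dvd (x + y) ^ p - (x ^ p + y ^ p)"
proof -
  have "p > 0" using assms prime_gt_0_nat by blast
  have "(x + y) ^ p = (\<Sum>k\<le>p. of_nat (p choose k) * x ^ k * y ^ (p - k))"
    by (rule binomial_ring)
  also have "{..p} = insert 0 (insert p {1..<p})" using \<open>p > 0\<close> by auto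
  finally have "(x + y) ^ p - (x ^ p + y ^ p)
      = (\<Sum>k\<in>{1..<p}. of_nat (p choose k) * x ^ k * y ^ (p - k))"
    using \<open>p > 0\<close> by (simp add: algebra_simps)
  also have "of_nat p dvd \<dots>"
  proof (intro dvd_sum dvd_mult2)
    fix k assume "k \<in> {1..<p}"
    then have "p dvd p choose k" using dvd_choose_prime assms by auto
    then obtain c where "p choose k = p * c" ..
    then show "of_nat p dvd (of_nat (p choose k) :: 'a)" by simp
  qed
  finally show ?thesis .
qed

lemma freshmans_dream_power_dvd:
  fixes x y :: "'a::comm_ring_1"
  assumes "prime p"
  shows "of_nat p dvd (x + y) ^ (p ^ j) - (x ^ (p ^ j) + y ^ (p ^ j))"
proof (induction j)
  case (Suc j)
  let ?q = "p ^ j"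
  have "(x + y) ^ ?q - (x ^ ?q + y ^ ?q) dvd ((x + y) ^ ?q) ^ p - (x ^ ?q + y ^ ?q) ^ p"
    by (simp add: power_diff_sumr2)
  with Suc have "of_nat p dvd ((x + y) ^ ?q) ^ p - (x ^ ?q + y ^ ?q) ^ p"
    by (rule dvd_trans)
  moreover have "of_nat p dvd (x ^ ?q + y ^ ?q) ^ p - ((x ^ ?q) ^ p + (y ^ ?q) ^ p)"
    using assms by (rule freshmans_dream_dvd)
  ultimately have "of_nat p dvd ((x + y) ^ ?q) ^ p - ((x ^ ?q) ^ p + (y ^ ?q) ^ p)"
    by (metis dvd_add diff_add_eq_diff_diff_swap diff_add_cancel)
  then show ?case by (simp only: power_Suc2 power_mult)
qed simp

definition residue_coeff_sum :: "nat \<Rightarrow> nat \<Rightarrow> 'a::comm_monoid_add poly \<Rightarrow> 'a" where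
  "residue_coeff_sum N i P = (\<Sum>n\<le>degree P. if [n = i] (mod N) then coeff P n else 0)"

lemma residue_coeff_sum_eq_sum_lessThan:
  assumes "degree P < M"
  shows "residue_coeff_sum N i P = (\<Sum>n<M. if [n = i] (mod N) then coeff P n else 0)"
proof -
  let ?g = "\<lambda>n. if [n = i] (mod N) then coeff P n else 0"
  have split: "{..<M} = {..degree P} \<union> {degree P<..<M}" using assms by auto
  have "sum ?g {degree P<..<M} = 0"
    by (intro sum.neutral) (auto simp: coeff_eq_0)
  moreover have "sum ?g {..<M} = sum ?g {..degree P} + sum ?g {degree P<..<M}"
    unfolding split by (rule sum.union_disjoint) auto
  ultimately show ?thesis
    unfolding residue_coeff_sum_def by simp
qed

lemma residue_coeff_sum_add:
  "residue_coeff_sum N i (P + Q) = residue_coeff_sum N i P + residue_coeff_sum N i Q"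
proof -
  define M where "M = Suc (max (degree P) (degree Q))"
  have "degree (P + Q) < M" "degree P < M" "degree Q < M"
    using degree_add_le_max[of P Q] unfolding M_def by linarith+
  then show ?thesis
    by (simp add: residue_coeff_sum_eq_sum_lessThan sum.distrib[symmetric] if_distrib cong: if_cong)
qed

lemma residue_coeff_sum_0 [simp]: "residue_coeff_sum N i 0 = 0"
  unfolding residue_coeff_sum_def by (intro sum.neutral) simp

lemma residue_coeff_sum_sum:
  "residue_coeff_sum N i (\<Sum>x\<in>A. P x) = (\<Sum>x\<in>A. residue_coeff_sum N i (P x))"
  by (induction A rule: infinite_finite_induct) (simp_all add: residue_coeff_sum_add)

lemma residue_coeff_sum_monom:
  "residue_coeff_sum N i (monom c e) = (if [e = i] (mod N) then c else 0)"
proof -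
  have "degree (monom c e) < Suc e" using degree_monom_le[of c e] by linarith
  then have "residue_coeff_sum N i (monom c e)
      = (\<Sum>n<Suc e. if [n = i] (mod N) then coeff (monom c e) n else 0)"
    by (rule residue_coeff_sum_eq_sum_lessThan)
  also have "\<dots> = (\<Sum>n\<in>{e}. if [n = i] (mod N) then coeff (monom c e) n else 0)"
    by (intro sum.mono_neutral_right) (auto simp: coeff_monom)
  finally show ?thesis by simp
qed

lemma residue_coeff_sum_monom_mult:
  fixes c :: "'a::comm_semiring_1"
  assumes "[k = 0] (mod N)"
  shows "residue_coeff_sum N i (monom c k * P) = c * residue_coeff_sum N i P"
proof -
  have shift: "[k + n = i] (mod N) \<longleftrightarrow> [n = i] (mod N)" for n
  proof -
    have "[k + n = n] (mod N)" using cong_add[OF assms cong_refl[of n]] by simp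
    then show ?thesis by (meson cong_sym cong_trans)
  qed
  have "monom c k * P = monom c k * (\<Sum>n\<le>degree P. monom (coeff P n) n)"
    by (simp only: poly_as_sum_of_monoms)
  also have "\<dots> = (\<Sum>n\<le>degree P. monom (c * coeff P n) (k + n))"
    by (simp add: sum_distrib_left mult_monom)
  finally have "residue_coeff_sum N i (monom c k * P)
      = (\<Sum>n\<le>degree P. if [n = i] (mod N) then c * coeff P n else 0)"
    by (simp add: residue_coeff_sum_sum residue_coeff_sum_monom shift)
  also have "\<dots> = c * residue_coeff_sum N i P"
    unfolding residue_coeff_sum_def sum_distrib_left by (intro sum.cong) simp_all
  finally show ?thesis .
qed

lemma residue_coeff_sum_diff:
  fixes P Q :: "'a::comm_ring_1 poly"
  shows "residue_coeff_sum N i (P - Q) = residue_coeff_sum N i P - residue_coeff_sum N i Q"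
  using residue_coeff_sum_add[of N i "P - Q" Q] by simp

lemma dvd_residue_coeff_sum_diff:
  fixes P Q :: "'a::comm_ring_1 poly"
  assumes "[P = Q] (mod [:m:], monom 1 N - 1)"
  shows "m dvd residue_coeff_sum N i P - residue_coeff_sum N i Q"
proof -
  have "[N = 0] (mod N)" by (simp add: cong_def)
  obtain u v where "P - Q = [:m:] * u + (monom 1 N - 1) * v"
    using assms unfolding cong2_def by blast
  then have "P - Q = monom m 0 * u + (monom 1 N * v - v)"
    by (simp add: monom_0 left_diff_distrib)
  then have "residue_coeff_sum N i (P - Q)
      = residue_coeff_sum N i (monom m 0 * u)
        + (residue_coeff_sum N i (monom 1 N * v) - residue_coeff_sum N i v)"
    by (simp only: residue_coeff_sum_add residue_coeff_sum_diff)
  also have "\<dots> = m * residue_coeff_sum N i u"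
    using \<open>[N = 0] (mod N)\<close> by (simp add: residue_coeff_sum_monom_mult)
  finally have "residue_coeff_sum N i P - residue_coeff_sum N i Q = m * residue_coeff_sum N i u"
    by (simp only: residue_coeff_sum_diff)
  then show ?thesis by simp
qed

lemma one_plus_monom_power:
  "(1 + monom 1 e) ^ n = (\<Sum>k\<le>n. monom (of_nat (n choose k) :: 'a::comm_semiring_1) (k * e))"
proof -
  have "(monom 1 e + 1) ^ n = (\<Sum>k\<le>n. of_nat (n choose k) * monom (1::'a) e ^ k * 1 ^ (n - k))"
    by (rule binomial_ring)
  also have "\<dots> = (\<Sum>k\<le>n. monom (of_nat (n choose k)) (k * e))"
    by (intro sum.cong) (auto simp: monom_power of_nat_monom mult_monom mult.commute)
  finally show ?thesis by (simp add: add.commute)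
qed

lemma prod_monom: "(\<Prod>j\<in>J. monom (c j) (e j)) = monom (\<Prod>j\<in>J. c j) (\<Sum>j\<in>J. e j)"
  by (induction J rule: infinite_finite_induct) (simp_all add: mult_monom monom_0 one_pCons)

lemma residue_coeff_sum_prod_one_plus_monom_power:
  assumes "finite J"
  shows "residue_coeff_sum N i (\<Prod>j\<in>J. (1 + monom 1 (e j)) ^ r j)
    = (\<Sum>k \<in> {k \<in> Pi\<^sub>E J (\<lambda>j. {..r j}). [(\<Sum>j\<in>J. k j * e j) = i] (mod N)}.
         \<Prod>j\<in>J. (of_nat (r j choose k j) :: 'a::comm_semiring_1))"
proof -
  let ?K = "Pi\<^sub>E J (\<lambda>j. {..r j})"
  have "finite ?K" using assms by (simp add: finite_PiE)
  have "(\<Prod>j\<in>J. (1 + monom 1 (e j)) ^ r j)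
      = (\<Prod>j\<in>J. \<Sum>k\<le>r j. monom (of_nat (r j choose k) :: 'a) (k * e j))"
    by (simp only: one_plus_monom_power)
  also have "\<dots> = (\<Sum>k\<in>?K. \<Prod>j\<in>J. monom (of_nat (r j choose k j)) (k j * e j))"
    using assms by (rule prod_sum_PiE) simp
  also have "\<dots> = (\<Sum>k\<in>?K. monom (\<Prod>j\<in>J. of_nat (r j choose k j)) (\<Sum>j\<in>J. k j * e j))"
    by (simp only: prod_monom)
  finally show ?thesis
    using \<open>finite ?K\<close>
    by (simp add: residue_coeff_sum_sum residue_coeff_sum_monom sum.inter_filter)
qed

lemma prime_dvd_choose_prime_power:
  assumes "prime p" "0 < m" "m < p ^ f"
  shows "p dvd p ^ f choose m"
proof -
  let ?X = "monom (1::int) 1"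
  have "[:int p:] dvd (1 + ?X) ^ p ^ f - (1 ^ p ^ f + ?X ^ p ^ f)"
    using freshmans_dream_power_dvd[OF assms(1), of 1 ?X f] by (simp only: of_nat_poly)
  then have "int p dvd coeff ((1 + ?X) ^ p ^ f - (1 + monom 1 (p ^ f))) m"
    by (simp add: const_poly_dvd_iff monom_power)
  also have "coeff ((1 + ?X) ^ p ^ f - (1 + monom 1 (p ^ f))) m = int (p ^ f choose m)"
    using assms(2,3) by (simp add: one_plus_monom_power coeff_sum coeff_monom)
  finally show ?thesis by simp
qed

lemma choose_prime_power_minus_one_cong:
  assumes "prime p" "m < p ^ f"
  shows "[int (p ^ f - 1 choose m) = (-1) ^ m] (mod int p)"
  using assms(2)
proof (induction m)
  case (Suc m)
  have "p ^ f = Suc (p ^ f - 1)" using Suc.prems by simp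
  then have "p ^ f choose Suc m = (p ^ f - 1 choose m) + (p ^ f - 1 choose Suc m)"
    by (metis binomial_Suc_Suc)
  moreover have "p dvd p ^ f choose Suc m"
    using prime_dvd_choose_prime_power[OF assms(1)] Suc.prems by simp
  ultimately have "int p dvd int (p ^ f - 1 choose m) + int (p ^ f - 1 choose Suc m)"
    by (simp flip: of_nat_add)
  moreover have "int p dvd int (p ^ f - 1 choose m) - (-1) ^ m"
    using Suc by (simp add: cong_iff_dvd_diff)
  ultimately have "int p dvd (int (p ^ f - 1 choose m) + int (p ^ f - 1 choose Suc m))
      - (int (p ^ f - 1 choose m) - (-1) ^ m)"
    by (rule dvd_diff)
  then show ?case by (simp add: cong_iff_dvd_diff)
qed simp

lemma residue_coeff_sum_one_plus_X_power:
  assumes "i < N"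
  shows "residue_coeff_sum N i ((1 + monom 1 1) ^ N)
    = (if i = 0 then 2 else (of_nat (N choose i) :: 'a::comm_semiring_1))"
proof -
  let ?g = "\<lambda>k. if [k = i] (mod N) then (of_nat (N choose k) :: 'a) else 0"
  have "residue_coeff_sum N i ((1 + monom 1 1) ^ N) = sum ?g {..N}"
    by (simp add: one_plus_monom_power residue_coeff_sum_sum residue_coeff_sum_monom)
  also have "\<dots> = sum ?g (if i = 0 then {0, N} else {i})"
  proof (rule sum.mono_neutral_right)
    show "\<forall>k\<in>{..N} - (if i = 0 then {0, N} else {i}). ?g k = 0"
    proof
      fix k assume k: "k \<in> {..N} - (if i = 0 then {0, N} else {i})"
      show "?g k = 0"
        using k assms by (cases "k = N") (auto simp: cong_def split: if_splits)
    qed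
  qed (use assms in auto)
  also have "\<dots> = (if i = 0 then 2 else of_nat (N choose i))"
    using assms by (simp add: cong_def)
  finally show ?thesis .
qed

lemma prod_one_plus_power_prime_power_cong:
  fixes x b :: "'a::comm_ring_1"
  assumes "prime p"
  shows "[(\<Prod>j\<in>J. (1 + x ^ p ^ j) ^ r j) = (1 + x) ^ (\<Sum>j\<in>J. r j * p ^ j)]
    (mod of_nat p, b)"
proof -
  have "[(1 + x ^ p ^ j) ^ r j = ((1 + x) ^ p ^ j) ^ r j] (mod of_nat p, b)" for j
    using freshmans_dream_power_dvd[OF assms, of 1 x j]
    by (intro cong2_pow cong2_sym[OF cong2_if_dvd_left]) simp
  then have "[(\<Prod>j\<in>J. (1 + x ^ p ^ j) ^ r j) = (\<Prod>j\<in>J. ((1 + x) ^ p ^ j) ^ r j)]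
      (mod of_nat p, b)"
    by (rule cong2_prod)
  also have "(\<Prod>j\<in>J. ((1 + x) ^ p ^ j) ^ r j) = (1 + x) ^ (\<Sum>j\<in>J. r j * p ^ j)"
    unfolding power_sum by (intro prod.cong) (simp_all flip: power_mult add: mult.commute)
  finally show ?thesis .
qed

lemma one_plus_X_power_prime_power_cong:
  assumes "prime p"
  shows "[(1 + monom 1 1) ^ p ^ f = 1 + monom (1::'a::comm_ring_1) 1]
    (mod of_nat p, monom 1 (p ^ f - 1) - 1)"
proof -
  let ?X = "monom (1::'a) 1" and ?b = "monom (1::'a) (p ^ f - 1) - 1"
  have "p ^ f > 0" using assms prime_gt_0_nat by simp
  have "[(1 + ?X) ^ p ^ f = 1 + ?X ^ p ^ f] (mod of_nat p, ?b)"
    using freshmans_dream_power_dvd[OF assms, of 1 ?X f] by (intro cong2_if_dvd_left) simp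
  also have "?X ^ p ^ f = 1 * ?X + ?b * ?X"
    using \<open>p ^ f > 0\<close> by (simp add: monom_power mult_monom algebra_simps)
  also have "[1 + (1 * ?X + ?b * ?X) = 1 + ?X] (mod of_nat p, ?b)"
    by (intro cong2_if_dvd_right) simp
  finally show ?thesis .
qed

lemma one_plus_X_power_multiple_cong:
  assumes "prime p" and "N = p ^ f - 1" and "t > 0"
  shows "[(1 + monom 1 1) ^ (N * t) = (1 + monom (1::'a::comm_ring_1) 1) ^ N]
    (mod of_nat p, monom 1 N - 1)"
proof (cases "N = 0")
  case False
  obtain t' where "t = Suc t'" using \<open>t > 0\<close> gr0_implies_Suc by blast
  have "Suc N = p ^ f" using False assms(2) by simp
  then have "[(1 + monom 1 1) ^ Suc N = 1 + monom (1::'a) 1] (mod of_nat p, monom 1 N - 1)"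
    using one_plus_X_power_prime_power_cong[OF assms(1), of f] assms(2) by simp
  then have "[(1 + monom 1 1) ^ (N + N * t') = (1 + monom (1::'a) 1) ^ N] (mod of_nat p, monom 1 N - 1)"
    by (rule cong2_power_add_period) (use False in simp)
  then show ?thesis using \<open>t = Suc t'\<close> by simp
qed simp

theorem lemma1:
  fixes p f i :: nat and r :: "nat \<Rightarrow> nat"
  assumes "prime p" and "f \<ge> 1"
    and "(\<Sum>j<f. r j * p ^ j) > 0"
    and "(p ^ f - 1) dvd (\<Sum>j<f. r j * p ^ j)"
    and "i < p ^ f - 1"
  shows "[(\<Sum>k \<in> {k \<in> Pi\<^sub>E {..<f} (\<lambda>j. {..r j}).
              [(\<Sum>j<f. k j * p ^ j) = i] (mod (p ^ f - 1))}.
            \<Prod>j<f. int (r j choose k j))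
          = (if i = 0 then 2 else (-1) ^ i)] (mod int p)"
proof -
  define N where "N = p ^ f - 1"
  define X where "X = (monom 1 1 :: int poly)"
  let ?P = "\<Prod>j<f. (1 + X ^ p ^ j) ^ r j"
  obtain t where t: "(\<Sum>j<f. r j * p ^ j) = N * t" and "t > 0"
    using assms(3,4) unfolding N_def by (auto elim!: dvdE)
  have "[?P = (1 + X) ^ (N * t)] (mod [:int p:], monom 1 N - 1)"
    using prod_one_plus_power_prime_power_cong[OF assms(1), of X r "{..<f}"] t
    by (simp add: of_nat_poly)
  also have "[(1 + X) ^ (N * t) = (1 + X) ^ N] (mod [:int p:], monom 1 N - 1)"
    using one_plus_X_power_multiple_cong[OF assms(1) N_def \<open>t > 0\<close>]
    by (simp add: X_def of_nat_poly)
  finally have P_cong: "[?P = (1 + X) ^ N] (mod [:int p:], monom 1 N - 1)" .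
  have "(\<Sum>k \<in> {k \<in> Pi\<^sub>E {..<f} (\<lambda>j. {..r j}). [(\<Sum>j<f. k j * p ^ j) = i] (mod N)}.
           \<Prod>j<f. int (r j choose k j)) = residue_coeff_sum N i ?P"
    by (simp add: X_def monom_power residue_coeff_sum_prod_one_plus_monom_power)
  also have "[\<dots> = residue_coeff_sum N i ((1 + X) ^ N)] (mod int p)"
    using dvd_residue_coeff_sum_diff[OF P_cong] by (simp add: cong_iff_dvd_diff)
  also have "residue_coeff_sum N i ((1 + X) ^ N) = (if i = 0 then 2 else int (N choose i))"
    using assms(5) unfolding X_def N_def by (rule residue_coeff_sum_one_plus_X_power)
  also have "[\<dots> = (if i = 0 then 2 else (-1) ^ i)] (mod int p)"
    using choose_prime_power_minus_one_cong[OF assms(1), of i f] assms(5) by (simp add: N_def)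
  finally show ?thesis unfolding N_def .
qed

end
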